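(* Let $X$ be a metric space and $1\le p\le q<\infty$. Then for every $S>0$, $\epsilon_{X;p}(S)\le \frac{q}{p}\,\epsilon_{X;q}(S)$.
   Context: For a metric space $(X,d)$ and $1\le p<\infty$, $\ell^p(X)$ is the space of $p$-summable real functions on $X$ and $\ell^p_1(X)$ its unit sphere. For a map $\xi\colon X\to\ell^p(X)$, written $x\mapsto\xi_x$, put $S(\xi)=\sup\{d(x,y):\xi_x(y)\neq0\}$ and $\varepsilon(\xi;p)=\sup_{x\ne y}\|\xi_x-\xi_y\|_p/d(x,y)$. The profile is $\epsilon_{X;p}(S)=\inf\{\varepsilon(\xi;p):\xi\colon X\to\ell^p_1(X),\ S(\xi)\le S\}$. *)

theory Defs
  imports "HOL-Analysis.Analysis"
begin

definition lp_space :: "real \<Rightarrow> ('a \<Rightarrow> real) set" where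
  "lp_space p = {f. (\<lambda>y. \<bar>f y\<bar> powr p) summable_on UNIV}"

definition lp_norm :: "real \<Rightarrow> ('a \<Rightarrow> real) \<Rightarrow> real" where
  "lp_norm p f = (\<Sum>\<^sub>\<infinity>y. \<bar>f y\<bar> powr p) powr (1 / p)"

definition lp_sphere :: "real \<Rightarrow> ('a \<Rightarrow> real) set" where
  "lp_sphere p = {f \<in> lp_space p. lp_norm p f = 1}"

definition prop_size :: "('a::metric_space \<Rightarrow> 'a \<Rightarrow> real) \<Rightarrow> ereal" where
  "prop_size \<xi> = (SUP xy \<in> {(x, y). \<xi> x y \<noteq> 0}. ereal (dist (fst xy) (snd xy)))"

definition var_eps :: "('a::metric_space \<Rightarrow> 'a \<Rightarrow> real) \<Rightarrow> real \<Rightarrow> ereal" where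
  "var_eps \<xi> p = (SUP xy \<in> {(x, y). x \<noteq> y}.
      ereal (lp_norm p (\<lambda>z. \<xi> (fst xy) z - \<xi> (snd xy) z) / dist (fst xy) (snd xy)))"

text \<open>The profile epsilon_{X;p}(S) (extended reals; infimum over the empty set is +\<infinity>).\<close>
definition profile :: "real \<Rightarrow> real \<Rightarrow> 'a::metric_space itself \<Rightarrow> ereal" where
  "profile p S (_ :: 'a itself) =
     (INF \<xi> \<in> {\<xi> :: 'a \<Rightarrow> 'a \<Rightarrow> real. (\<forall>x. \<xi> x \<in> lp_sphere p) \<and> prop_size \<xi> \<le> ereal S}. var_eps \<xi> p)"

end

theory Submission
  imports Defs
begin

text \<open>
  The Mazur map \<open>f \<mapsto> sgn f \<bar>f\<bar>\<^sup>q\<^sup>/\<^sup>p\<close> carries the unit sphere of \<open>\<ell>\<^sup>q\<close> onto that of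
  \<open>\<ell>\<^sup>p\<close> and preserves supports, so applied to every \<open>\<xi>\<^sub>x\<close> it keeps the propagation bound
  \<open>S\<close>. It is \<open>q/p\<close>-Lipschitz between the spheres: pointwise,
  \<open>\<bar>M a - M b\<bar> \<le> (q/p) \<bar>a - b\<bar> ((\<bar>a\<bar>\<^sup>q + \<bar>b\<bar>\<^sup>q)/2)\<^sup>1\<^sup>/\<^sup>p\<^sup>-\<^sup>1\<^sup>/\<^sup>q\<close>, which
  follows by differentiating in the half-width of the interval \<open>[b, a]\<close> and using the
  power mean inequality; Hoelder's inequality with exponents \<open>q/p\<close> and \<open>q/(q-p)\<close> then sums
  this to \<open>\<parallel>M f - M g\<parallel>\<^sub>p \<le> (q/p) \<parallel>f - g\<parallel>\<^sub>q\<close>, because the averages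
  \<open>(\<bar>f\<bar>\<^sup>q + \<bar>g\<bar>\<^sup>q)/2\<close> sum to 1 on the sphere.
\<close>

definition signed_powr :: "real \<Rightarrow> real \<Rightarrow> real" where
  "signed_powr r t = sgn t * \<bar>t\<bar> powr r"

lemma abs_signed_powr [simp]: "\<bar>signed_powr r t\<bar> = \<bar>t\<bar> powr r"
  by (simp add: signed_powr_def abs_mult abs_sgn_eq)

lemma signed_powr_eq_0_iff [simp]: "signed_powr r t = 0 \<longleftrightarrow> t = 0"
  by (auto simp: signed_powr_def sgn_0_0)

lemma signed_powr_nonneg: "0 \<le> t \<Longrightarrow> signed_powr r t = t powr r"
  by (cases "t = 0") (auto simp: signed_powr_def)

lemma signed_powr_nonpos: "t \<le> 0 \<Longrightarrow> signed_powr r t = - ((- t) powr r)"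
  by (cases "t = 0") (auto simp: signed_powr_def)

lemma signed_powr_mono:
  assumes "0 < r" "a \<le> b"
  shows "signed_powr r a \<le> signed_powr r b"
proof -
  have "- (x powr r) \<le> y powr r" for x y
    using powr_ge_zero[of x r] powr_ge_zero[of y r] by linarith
  then show ?thesis
    using assms by (cases "0 \<le> a"; cases "0 \<le> b")
      (auto simp: signed_powr_nonneg signed_powr_nonpos intro: powr_mono2)
qed

lemma has_real_derivative_zero_if_abs_le_powr:
  assumes "1 < r" "f 0 = 0" "\<And>t. \<bar>f t\<bar> \<le> \<bar>t\<bar> powr r"
  shows "(f has_real_derivative 0) (at 0)"
  unfolding has_field_derivative_iff
proof (rule Lim_null_comparison)
  have "norm ((f t - f 0) / (t - 0)) \<le> \<bar>t\<bar> powr (r - 1)" if "t \<noteq> 0" for t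
  proof -
    have "\<bar>f t\<bar> / \<bar>t\<bar> \<le> \<bar>t\<bar> powr r / \<bar>t\<bar>"
      using assms(3)[of t] by (rule divide_right_mono) simp
    then show ?thesis
      using that by (simp add: assms(2) powr_diff)
  qed
  then show "\<forall>\<^sub>F t in at 0. norm ((f t - f 0) / (t - 0)) \<le> \<bar>t\<bar> powr (r - 1)"
    by (auto simp: eventually_at_filter)
  have "((\<lambda>t. \<bar>t\<bar> powr (r - 1)) \<longlongrightarrow> \<bar>0\<bar> powr (r - 1)) (at (0::real))"
    using assms(1) by (intro tendsto_intros) auto
  then show "((\<lambda>t. \<bar>t\<bar> powr (r - 1)) \<longlongrightarrow> 0) (at 0)" by simp
qed

lemma DERIV_signed_powr:
  assumes "1 < r"
  shows "(signed_powr r has_real_derivative r * \<bar>t\<bar> powr (r - 1)) (at t)"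
proof -
  consider "0 < t" | "t < 0" | "t = 0" by linarith
  then show ?thesis
  proof cases
    case 1
    have "((\<lambda>x. x powr r) has_real_derivative r * \<bar>t\<bar> powr (r - 1)) (at t)"
      using 1 by (auto intro!: derivative_eq_intros)
    then show ?thesis
      by (rule has_field_derivative_transform_within_open[where S = "{0<..}"])
        (use 1 in \<open>auto simp: signed_powr_nonneg\<close>)
  next
    case 2
    have "((\<lambda>x. - ((- x) powr r)) has_real_derivative r * \<bar>t\<bar> powr (r - 1)) (at t)"
      using 2 by (auto intro!: derivative_eq_intros)
    then show ?thesis
      by (rule has_field_derivative_transform_within_open[where S = "{..<0}"])
        (use 2 in \<open>auto simp: signed_powr_nonpos\<close>)
  next
    case 3
    have "(signed_powr r has_real_derivative 0) (at 0)"
      by (rule has_real_derivative_zero_if_abs_le_powr[OF assms]) (simp_all add: signed_powr_def abs_mult)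
    then show ?thesis
      using 3 assms by simp
  qed
qed

lemma DERIV_abs_powr:
  assumes "1 < q"
  shows "((\<lambda>x. \<bar>x\<bar> powr q) has_real_derivative q * signed_powr (q - 1) t) (at t)"
proof -
  consider "0 < t" | "t < 0" | "t = 0" by linarith
  then show ?thesis
  proof cases
    case 1
    have "((\<lambda>x. x powr q) has_real_derivative q * signed_powr (q - 1) t) (at t)"
      using 1 by (auto intro!: derivative_eq_intros simp: signed_powr_nonneg)
    then show ?thesis
      by (rule has_field_derivative_transform_within_open[where S = "{0<..}"])
        (use 1 in \<open>auto simp: signed_powr_nonneg\<close>)
  next
    case 2
    have "((\<lambda>x. (- x) powr q) has_real_derivative q * signed_powr (q - 1) t) (at t)"
      using 2 by (auto intro!: derivative_eq_intros simp: signed_powr_nonpos)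
    then show ?thesis
      by (rule has_field_derivative_transform_within_open[where S = "{..<0}"])
        (use 2 in \<open>auto simp: signed_powr_nonpos\<close>)
  next
    case 3
    have "((\<lambda>x. \<bar>x\<bar> powr q) has_real_derivative 0) (at 0)"
      by (rule has_real_derivative_zero_if_abs_le_powr[OF assms]) simp_all
    then show ?thesis
      using 3 by (simp add: signed_powr_def)
  qed
qed

lemma Youngs_inequality_nonneg:
  fixes a b \<alpha> \<beta> :: real
  assumes "0 \<le> a" "0 \<le> b" "0 \<le> \<alpha>" "0 \<le> \<beta>" "\<alpha> + \<beta> = 1"
  shows "a powr \<alpha> * b powr \<beta> \<le> \<alpha> * a + \<beta> * b"
proof (cases "a = 0 \<or> b = 0")
  case True
  then show ?thesis using assms by auto
next
  case False
  then show ?thesis using assms by (intro Youngs_inequality_0) auto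
qed

lemma power_mean_le:
  fixes x y s q :: real
  assumes "0 \<le> x" "0 \<le> y" "0 < s" "s \<le> q"
  shows "(x powr s + y powr s) / 2 \<le> ((x powr q + y powr q) / 2) powr (s / q)"
proof (cases "x powr q + y powr q = 0")
  case True
  then have "x = 0" "y = 0"
    using assms by (simp_all add: add_nonneg_eq_0_iff)
  then show ?thesis by simp
next
  case False
  define w where "w = (x powr q + y powr q) / 2"
  define \<theta> where "\<theta> = s / q"
  have w: "0 < w" using False by (simp add: w_def add_nonneg_nonneg order_le_neq_trans)
  have q: "0 < q" using assms by linarith
  have young: "(z powr q / w) powr \<theta> \<le> \<theta> * (z powr q / w) + (1 - \<theta>)" if "0 \<le> z" for z
    using Youngs_inequality_nonneg[of "z powr q / w" 1 \<theta> "1 - \<theta>"] w assms that q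
    by (simp add: \<theta>_def)
  have split: "z powr s = w powr \<theta> * (z powr q / w) powr \<theta>" if "0 \<le> z" for z
    using w q that by (simp add: powr_divide powr_powr \<theta>_def)
  have "x powr s + y powr s = w powr \<theta> * ((x powr q / w) powr \<theta> + (y powr q / w) powr \<theta>)"
    using split assms by (simp add: distrib_left)
  also have "\<dots> \<le> w powr \<theta> * (\<theta> * (x powr q / w) + (1 - \<theta>) + (\<theta> * (y powr q / w) + (1 - \<theta>)))"
    using young[of x] young[of y] assms by (intro mult_left_mono add_mono) auto
  also have "\<dots> = w powr \<theta> * (\<theta> * ((x powr q + y powr q) / w) + 2 * (1 - \<theta>))"
    by (simp add: algebra_simps add_divide_distrib)
  also have "(x powr q + y powr q) / w = 2"
    using w by (simp add: w_def nonzero_divide_eq_eq)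
  finally show ?thesis
    by (simp add: w_def \<theta>_def)
qed

lemma abs_powr_sum_mono:
  fixes m h H q :: real
  assumes "1 < q" "0 \<le> h" "h \<le> H"
  shows "\<bar>m + h\<bar> powr q + \<bar>m - h\<bar> powr q \<le> \<bar>m + H\<bar> powr q + \<bar>m - H\<bar> powr q"
proof (rule DERIV_nonneg_imp_nondecreasing[OF assms(3)])
  fix u assume "h \<le> u" "u \<le> H"
  have "((\<lambda>u. \<bar>m + u\<bar> powr q) has_real_derivative q * signed_powr (q - 1) (m + u) * 1) (at u)"
    by (rule DERIV_chain2[OF DERIV_abs_powr[OF assms(1)]]) (auto intro!: derivative_eq_intros)
  moreover have "((\<lambda>u. \<bar>m - u\<bar> powr q) has_real_derivative q * signed_powr (q - 1) (m - u) * -1) (at u)"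
    by (rule DERIV_chain2[OF DERIV_abs_powr[OF assms(1)]]) (auto intro!: derivative_eq_intros)
  ultimately have "((\<lambda>u. \<bar>m + u\<bar> powr q + \<bar>m - u\<bar> powr q) has_real_derivative
      q * signed_powr (q - 1) (m + u) * 1 + q * signed_powr (q - 1) (m - u) * -1) (at u)"
    by (rule DERIV_add)
  moreover have "signed_powr (q - 1) (m - u) \<le> signed_powr (q - 1) (m + u)"
    using assms \<open>h \<le> u\<close> by (intro signed_powr_mono) auto
  then have "0 \<le> q * signed_powr (q - 1) (m + u) * 1 + q * signed_powr (q - 1) (m - u) * -1"
    using assms(1) by (simp flip: right_diff_distrib)
  ultimately show "\<exists>D. ((\<lambda>u. \<bar>m + u\<bar> powr q + \<bar>m - u\<bar> powr q) has_real_derivative D) (at u) \<and> 0 \<le> D"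
    by blast
qed

lemma abs_powr_sum_le_power_mean:
  fixes m h H r q :: real
  assumes "1 < r" "1 < q" "r - 1 \<le> q" "0 \<le> h" "h \<le> H"
  shows "\<bar>m + h\<bar> powr (r - 1) + \<bar>m - h\<bar> powr (r - 1)
    \<le> 2 * ((\<bar>m + H\<bar> powr q + \<bar>m - H\<bar> powr q) / 2) powr ((r - 1) / q)"
proof -
  have "(\<bar>m + h\<bar> powr (r - 1) + \<bar>m - h\<bar> powr (r - 1)) / 2
      \<le> ((\<bar>m + h\<bar> powr q + \<bar>m - h\<bar> powr q) / 2) powr ((r - 1) / q)"
    using assms by (intro power_mean_le) auto
  also have "\<dots> \<le> ((\<bar>m + H\<bar> powr q + \<bar>m - H\<bar> powr q) / 2) powr ((r - 1) / q)"
    using assms by (intro powr_mono2 divide_right_mono abs_powr_sum_mono) auto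
  finally show ?thesis
    by simp
qed

lemma signed_powr_symmetric_diff_le:
  fixes m H r q :: real
  assumes "1 < r" "1 < q" "r - 1 \<le> q" "0 \<le> H"
  shows "signed_powr r (m + H) - signed_powr r (m - H)
    \<le> 2 * r * H * ((\<bar>m + H\<bar> powr q + \<bar>m - H\<bar> powr q) / 2) powr ((r - 1) / q)"
proof -
  define M where "M = ((\<bar>m + H\<bar> powr q + \<bar>m - H\<bar> powr q) / 2) powr ((r - 1) / q)"
  let ?K = "\<lambda>h. 2 * r * h * M - (signed_powr r (m + h) - signed_powr r (m - h))"
  have "?K 0 \<le> ?K H"
  proof (rule DERIV_nonneg_imp_nondecreasing[OF \<open>0 \<le> H\<close>])
    fix h assume "0 \<le> h" "h \<le> H"
    have "((\<lambda>h. signed_powr r (m + h)) has_real_derivative r * \<bar>m + h\<bar> powr (r - 1) * 1) (at h)"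
      by (rule DERIV_chain2[OF DERIV_signed_powr[OF assms(1)]]) (auto intro!: derivative_eq_intros)
    moreover have "((\<lambda>h. signed_powr r (m - h)) has_real_derivative r * \<bar>m - h\<bar> powr (r - 1) * -1) (at h)"
      by (rule DERIV_chain2[OF DERIV_signed_powr[OF assms(1)]]) (auto intro!: derivative_eq_intros)
    ultimately have "(?K has_real_derivative
        2 * r * M - (r * \<bar>m + h\<bar> powr (r - 1) * 1 - r * \<bar>m - h\<bar> powr (r - 1) * -1)) (at h)"
      by (auto intro!: derivative_eq_intros)
    moreover have "\<bar>m + h\<bar> powr (r - 1) + \<bar>m - h\<bar> powr (r - 1) \<le> 2 * M"
      unfolding M_def using assms(1-3) \<open>0 \<le> h\<close> \<open>h \<le> H\<close> by (rule abs_powr_sum_le_power_mean)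
    then have "0 \<le> 2 * r * M - (r * \<bar>m + h\<bar> powr (r - 1) * 1 - r * \<bar>m - h\<bar> powr (r - 1) * -1)"
      using assms(1) by (simp flip: distrib_left)
    ultimately show "\<exists>D. (?K has_real_derivative D) (at h) \<and> 0 \<le> D"
      by blast
  qed
  then show ?thesis
    by (simp add: M_def)
qed

lemma signed_powr_diff_le:
  fixes a b r q :: real
  assumes "1 < r" "1 < q" "r - 1 \<le> q"
  shows "\<bar>signed_powr r a - signed_powr r b\<bar>
    \<le> r * \<bar>a - b\<bar> * ((\<bar>a\<bar> powr q + \<bar>b\<bar> powr q) / 2) powr ((r - 1) / q)"
proof -
  have ordered: "\<bar>signed_powr r a - signed_powr r b\<bar>
      \<le> r * \<bar>a - b\<bar> * ((\<bar>a\<bar> powr q + \<bar>b\<bar> powr q) / 2) powr ((r - 1) / q)"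
    if "b \<le> a" for a b
  proof -
    have "signed_powr r b \<le> signed_powr r a"
      using assms that by (intro signed_powr_mono) auto
    moreover have "signed_powr r ((a + b) / 2 + (a - b) / 2) - signed_powr r ((a + b) / 2 - (a - b) / 2)
        \<le> 2 * r * ((a - b) / 2) * ((\<bar>(a + b) / 2 + (a - b) / 2\<bar> powr q
          + \<bar>(a + b) / 2 - (a - b) / 2\<bar> powr q) / 2) powr ((r - 1) / q)"
      using assms that by (intro signed_powr_symmetric_diff_le) auto
    ultimately show ?thesis
      using that by (simp add: field_simps)
  qed
  show ?thesis
    using ordered[of a b] ordered[of b a] by (cases "b \<le> a") (auto simp: abs_minus_commute add.commute)
qed

lemma Youngs_inequality_normalized:
  fixes a b U V \<alpha> \<beta> :: real
  assumes "0 \<le> a" "0 \<le> b" "0 < U" "0 < V" "0 \<le> \<alpha>" "0 \<le> \<beta>" "\<alpha> + \<beta> = 1"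
  shows "a powr \<alpha> * b powr \<beta> \<le> U powr \<alpha> * V powr \<beta> * (\<alpha> / U * a + \<beta> / V * b)"
proof -
  have "a powr \<alpha> * b powr \<beta> = U powr \<alpha> * V powr \<beta> * ((a / U) powr \<alpha> * (b / V) powr \<beta>)"
    using assms by (simp add: powr_divide)
  also have "\<dots> \<le> U powr \<alpha> * V powr \<beta> * (\<alpha> * (a / U) + \<beta> * (b / V))"
    using assms by (intro mult_left_mono Youngs_inequality_nonneg) auto
  finally show ?thesis
    by simp
qed

lemma Holder_inequality_infsum:
  fixes u v :: "'a \<Rightarrow> real"
  assumes u: "u summable_on A" "\<And>x. x \<in> A \<Longrightarrow> 0 \<le> u x"
    and v: "v summable_on A" "\<And>x. x \<in> A \<Longrightarrow> 0 \<le> v x"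
    and \<alpha>\<beta>: "0 \<le> \<alpha>" "0 \<le> \<beta>" "\<alpha> + \<beta> = 1"
  shows "(\<lambda>x. u x powr \<alpha> * v x powr \<beta>) summable_on A"
    and "(\<Sum>\<^sub>\<infinity>x\<in>A. u x powr \<alpha> * v x powr \<beta>) \<le> (\<Sum>\<^sub>\<infinity>x\<in>A. u x) powr \<alpha> * (\<Sum>\<^sub>\<infinity>x\<in>A. v x) powr \<beta>"
proof -
  define U where "U = (\<Sum>\<^sub>\<infinity>x\<in>A. u x)"
  define V where "V = (\<Sum>\<^sub>\<infinity>x\<in>A. v x)"
  have "0 \<le> U" "0 \<le> V"
    using u v by (simp_all add: U_def V_def infsum_nonneg)
  have "(\<lambda>x. u x powr \<alpha> * v x powr \<beta>) summable_on A \<and>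
      (\<Sum>\<^sub>\<infinity>x\<in>A. u x powr \<alpha> * v x powr \<beta>) \<le> U powr \<alpha> * V powr \<beta>"
  proof (cases "U = 0 \<or> V = 0")
    case True
    then have "u x = 0 \<or> v x = 0" if "x \<in> A" for x
      using that u v nonneg_infsum_le_0D[of u A x] nonneg_infsum_le_0D[of v A x]
      by (auto simp: U_def V_def)
    then show ?thesis
      using \<open>0 \<le> U\<close> \<open>0 \<le> V\<close> by (auto simp: summable_on_0 infsum_0)
  next
    case False
    with \<open>0 \<le> U\<close> \<open>0 \<le> V\<close> have "0 < U" "0 < V" by auto
    define c where "c = U powr \<alpha> * V powr \<beta>"
    have bound: "u x powr \<alpha> * v x powr \<beta> \<le> c * (\<alpha> / U * u x + \<beta> / V * v x)" if "x \<in> A" for x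
      unfolding c_def using u v that \<alpha>\<beta> \<open>0 < U\<close> \<open>0 < V\<close>
      by (intro Youngs_inequality_normalized) auto
    have dominant: "((\<lambda>x. c * (\<alpha> / U * u x + \<beta> / V * v x)) has_sum c * (\<alpha> / U * U + \<beta> / V * V)) A"
      using u(1) v(1) unfolding U_def V_def
      by (intro has_sum_cmult_right has_sum_add) (auto intro: has_sum_cmult_right)
    have summable: "(\<lambda>x. u x powr \<alpha> * v x powr \<beta>) summable_on A"
      using has_sum_imp_summable[OF dominant] bound by (rule summable_on_comparison_test) auto
    have "(\<Sum>\<^sub>\<infinity>x\<in>A. u x powr \<alpha> * v x powr \<beta>) \<le> c * (\<alpha> / U * U + \<beta> / V * V)"
      using summable dominant bound by (rule has_sum_mono[OF has_sum_infsum])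
    also have "c * (\<alpha> / U * U + \<beta> / V * V) = c"
      using \<open>0 < U\<close> \<open>0 < V\<close> \<alpha>\<beta>(3) by simp
    finally show ?thesis
      using summable unfolding c_def by blast
  qed
  then show "(\<lambda>x. u x powr \<alpha> * v x powr \<beta>) summable_on A"
    and "(\<Sum>\<^sub>\<infinity>x\<in>A. u x powr \<alpha> * v x powr \<beta>) \<le> (\<Sum>\<^sub>\<infinity>x\<in>A. u x) powr \<alpha> * (\<Sum>\<^sub>\<infinity>x\<in>A. v x) powr \<beta>"
    by (simp_all add: U_def V_def)
qed

lemma abs_signed_powr_diff_powr_le:
  fixes a b p q :: real
  assumes "1 \<le> p" "p < q"
  shows "\<bar>signed_powr (q / p) a - signed_powr (q / p) b\<bar> powr p
    \<le> (q / p) powr p * ((\<bar>a - b\<bar> powr q) powr (p / q) * ((\<bar>a\<bar> powr q + \<bar>b\<bar> powr q) / 2) powr ((q - p) / q))"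
proof -
  define r where "r = q / p"
  define m where "m = (\<bar>a\<bar> powr q + \<bar>b\<bar> powr q) / 2"
  have "0 < p" "0 < q" "1 < r"
    using assms by (auto simp: r_def)
  have "r \<le> q / 1"
    unfolding r_def using assms by (intro divide_left_mono) auto
  then have "r - 1 \<le> q"
    by simp
  have exponent: "(r - 1) / q * p = (q - p) / q"
    using \<open>0 < p\<close> \<open>0 < q\<close> by (simp add: r_def field_simps)
  have "\<bar>signed_powr r a - signed_powr r b\<bar> powr p \<le> (r * \<bar>a - b\<bar> * m powr ((r - 1) / q)) powr p"
    unfolding m_def using signed_powr_diff_le[OF \<open>1 < r\<close> _ \<open>r - 1 \<le> q\<close>] assms \<open>0 < p\<close>
    by (intro powr_mono2) auto
  also have "\<dots> = r powr p * (\<bar>a - b\<bar> powr p * (m powr ((r - 1) / q)) powr p)"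
    using \<open>1 < r\<close> by (simp add: powr_mult)
  also have "\<bar>a - b\<bar> powr p = (\<bar>a - b\<bar> powr q) powr (p / q)"
    using \<open>0 < q\<close> by (simp add: powr_powr)
  also have "(m powr ((r - 1) / q)) powr p = m powr ((q - p) / q)"
    by (simp only: powr_powr exponent)
  finally show ?thesis
    by (simp add: r_def m_def)
qed

lemma abs_diff_powr_le:
  fixes x y q :: real
  assumes "0 < q"
  shows "\<bar>x - y\<bar> powr q \<le> 2 powr q * (\<bar>x\<bar> powr q + \<bar>y\<bar> powr q)"
proof -
  have "\<bar>x - y\<bar> powr q \<le> (2 * max \<bar>x\<bar> \<bar>y\<bar>) powr q"
    using assms by (intro powr_mono2) auto
  also have "\<dots> = 2 powr q * max \<bar>x\<bar> \<bar>y\<bar> powr q"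
    by (simp add: powr_mult)
  also have "max \<bar>x\<bar> \<bar>y\<bar> powr q \<le> \<bar>x\<bar> powr q + \<bar>y\<bar> powr q"
    by (simp add: max_def)
  finally show ?thesis
    by simp
qed

lemma lp_space_diff:
  assumes "f \<in> lp_space q" "g \<in> lp_space q" "0 < q"
  shows "(\<lambda>y. f y - g y) \<in> lp_space q"
  unfolding lp_space_def mem_Collect_eq
proof (rule summable_on_comparison_test)
  show "(\<lambda>y. 2 powr q * (\<bar>f y\<bar> powr q + \<bar>g y\<bar> powr q)) summable_on UNIV"
    using assms by (intro summable_on_cmult_right summable_on_add) (auto simp: lp_space_def)
qed (use abs_diff_powr_le assms(3) in auto)

lemma lp_sphere_has_sum:
  assumes "f \<in> lp_sphere q" "0 < q"
  shows "((\<lambda>y. \<bar>f y\<bar> powr q) has_sum 1) UNIV"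
proof -
  have "(\<Sum>\<^sub>\<infinity>y. \<bar>f y\<bar> powr q) = ((\<Sum>\<^sub>\<infinity>y. \<bar>f y\<bar> powr q) powr (1 / q)) powr q"
    using assms(2) by (simp add: powr_powr infsum_nonneg)
  also have "\<dots> = 1"
    using assms by (simp add: lp_sphere_def lp_norm_def)
  finally show ?thesis
    using assms(1) has_sum_infsum[of "\<lambda>y. \<bar>f y\<bar> powr q" UNIV]
    by (simp add: lp_sphere_def lp_space_def)
qed

lemma lp_sphere_mean_has_sum:
  assumes "f \<in> lp_sphere q" "g \<in> lp_sphere q" "0 < q"
  shows "((\<lambda>y. (\<bar>f y\<bar> powr q + \<bar>g y\<bar> powr q) / 2) has_sum 1) UNIV"
  using has_sum_cmult_left[OF has_sum_add[OF lp_sphere_has_sum[OF assms(1,3)] lp_sphere_has_sum[OF assms(2,3)]],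
      of "1 / 2"]
  by simp

definition mazur_map :: "real \<Rightarrow> real \<Rightarrow> ('a \<Rightarrow> real) \<Rightarrow> 'a \<Rightarrow> real" where
  "mazur_map q p f y = signed_powr (q / p) (f y)"

lemma mazur_map_lp_sphere:
  assumes "f \<in> lp_sphere q" "0 < p" "0 < q"
  shows "mazur_map q p f \<in> lp_sphere p"
proof -
  have "\<bar>mazur_map q p f y\<bar> powr p = \<bar>f y\<bar> powr q" for y
    using assms(2) by (simp add: mazur_map_def powr_powr)
  then show ?thesis
    using lp_sphere_has_sum[OF assms(1,3)]
    by (simp add: lp_sphere_def lp_space_def lp_norm_def has_sum_imp_summable infsumI)
qed

lemma lp_norm_mazur_map_diff_le:
  assumes f: "f \<in> lp_sphere q" and g: "g \<in> lp_sphere q" and "1 \<le> p" "p < q"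
  shows "lp_norm p (\<lambda>y. mazur_map q p f y - mazur_map q p g y) \<le> q / p * lp_norm q (\<lambda>y. f y - g y)"
proof -
  define d where "d = (\<lambda>y. \<bar>f y - g y\<bar> powr q)"
  define m where "m = (\<lambda>y. (\<bar>f y\<bar> powr q + \<bar>g y\<bar> powr q) / 2)"
  define G where "G = (\<lambda>y. d y powr (p / q) * m y powr ((q - p) / q))"
  have "0 < p" "0 < q"
    using assms by auto
  have "(\<lambda>y. f y - g y) \<in> lp_space q"
    using f g \<open>0 < q\<close> by (intro lp_space_diff) (auto simp: lp_sphere_def)
  then have d: "d summable_on UNIV"
    by (simp add: d_def lp_space_def)
  have m: "(m has_sum 1) UNIV"
    unfolding m_def using f g \<open>0 < q\<close> by (rule lp_sphere_mean_has_sum)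
  have pointwise: "\<bar>mazur_map q p f y - mazur_map q p g y\<bar> powr p \<le> (q / p) powr p * G y" for y
    unfolding mazur_map_def G_def d_def m_def using assms(3,4) by (rule abs_signed_powr_diff_powr_le)
  have holder: "G summable_on UNIV" "(\<Sum>\<^sub>\<infinity>y. G y) \<le> (\<Sum>\<^sub>\<infinity>y. d y) powr (p / q)"
    using Holder_inequality_infsum[OF d _ has_sum_imp_summable[OF m], of "p / q" "(q - p) / q"]
      infsumI[OF m] assms \<open>0 < q\<close>
    by (simp_all add: G_def d_def m_def diff_divide_distrib)
  have dominant: "(\<lambda>y. (q / p) powr p * G y) summable_on UNIV"
    using holder(1) by (rule summable_on_cmult_right)
  moreover have "(\<lambda>y. \<bar>mazur_map q p f y - mazur_map q p g y\<bar> powr p) summable_on UNIV"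
    using dominant pointwise by (rule summable_on_comparison_test) simp
  ultimately have "(\<Sum>\<^sub>\<infinity>y. \<bar>mazur_map q p f y - mazur_map q p g y\<bar> powr p) \<le> (\<Sum>\<^sub>\<infinity>y. (q / p) powr p * G y)"
    using pointwise by (intro infsum_mono)
  also have "\<dots> \<le> (q / p) powr p * (\<Sum>\<^sub>\<infinity>y. d y) powr (p / q)"
    using holder(2) by (simp add: infsum_cmult_right' mult_left_mono)
  also have "\<dots> = (q / p) powr p * lp_norm q (\<lambda>y. f y - g y) powr p"
    using \<open>0 < p\<close> \<open>0 < q\<close> by (simp add: lp_norm_def d_def powr_powr infsum_nonneg)
  also have "\<dots> = (q / p * lp_norm q (\<lambda>y. f y - g y)) powr p"
    by (rule powr_mult[symmetric])
  finally have "(\<Sum>\<^sub>\<infinity>y. \<bar>mazur_map q p f y - mazur_map q p g y\<bar> powr p) powr (1 / p)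
      \<le> ((q / p * lp_norm q (\<lambda>y. f y - g y)) powr p) powr (1 / p)"
    using \<open>0 < p\<close> by (intro powr_mono2) (auto intro: infsum_nonneg)
  also have "\<dots> = q / p * lp_norm q (\<lambda>y. f y - g y)"
    using \<open>0 < p\<close> \<open>0 < q\<close> by (simp add: powr_powr lp_norm_def)
  finally show ?thesis
    by (simp add: lp_norm_def)
qed

lemma prop_size_mazur_map: "prop_size (\<lambda>x. mazur_map q p (\<xi> x)) = prop_size \<xi>"
  by (simp add: prop_size_def mazur_map_def)

lemma var_eps_mazur_map_le:
  fixes \<xi> :: "'a::metric_space \<Rightarrow> 'a \<Rightarrow> real"
  assumes "\<And>x. \<xi> x \<in> lp_sphere q" "1 \<le> p" "p < q"
  shows "var_eps (\<lambda>x. mazur_map q p (\<xi> x)) p \<le> ereal (q / p) * var_eps \<xi> q"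
proof -
  have "ereal (lp_norm p (\<lambda>z. mazur_map q p (\<xi> x) z - mazur_map q p (\<xi> y) z) / dist x y)
      \<le> ereal (q / p) * var_eps \<xi> q" if "x \<noteq> y" for x y
  proof -
    have "lp_norm p (\<lambda>z. mazur_map q p (\<xi> x) z - mazur_map q p (\<xi> y) z)
        \<le> q / p * lp_norm q (\<lambda>z. \<xi> x z - \<xi> y z)"
      by (rule lp_norm_mazur_map_diff_le[OF assms(1,1,2,3)])
    then have "lp_norm p (\<lambda>z. mazur_map q p (\<xi> x) z - mazur_map q p (\<xi> y) z) / dist x y
        \<le> q / p * lp_norm q (\<lambda>z. \<xi> x z - \<xi> y z) / dist x y"
      by (rule divide_right_mono) simp
    also have "ereal \<dots> = ereal (q / p) * ereal (lp_norm q (\<lambda>z. \<xi> x z - \<xi> y z) / dist x y)"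
      by simp
    also have "\<dots> \<le> ereal (q / p) * var_eps \<xi> q"
      unfolding var_eps_def using assms that
      by (intro ereal_mult_left_mono SUP_upper2[of "(x, y)"]) auto
    finally show ?thesis
      by simp
  qed
  then show ?thesis
    unfolding var_eps_def[of "\<lambda>x. mazur_map q p (\<xi> x)"] by (auto intro!: SUP_least)
qed

lemma INF_ereal_cmult:
  assumes "0 < c"
  shows "(INF i\<in>I. ereal c * f i) = ereal c * (INF i\<in>I. f i)"
proof -
  have "bij (\<lambda>x::ereal. ereal c * x)"
    by (rule bij_betw_byWitness[of _ "\<lambda>x. x / ereal c"])
      (use assms in \<open>auto simp: ereal_mult_divide ereal_divide_eq\<close>)
  moreover have "mono (\<lambda>x::ereal. ereal c * x)"
    using assms by (simp add: mono_def ereal_mult_left_mono)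
  ultimately show ?thesis
    by (simp add: mono_bij_Inf image_comp)
qed

theorem corollary2p3p1:
  fixes p q S :: real
  assumes "1 \<le> p" and "p \<le> q" and "S > 0"
  shows "profile p S TYPE('a::metric_space) \<le> ereal (q / p) * profile q S TYPE('a)"
proof (cases "p = q")
  case True
  then show ?thesis
    using assms by simp
next
  case False
  with assms have "p < q" by simp
  define admissible where "admissible r = {\<xi> :: 'a \<Rightarrow> 'a \<Rightarrow> real.
    (\<forall>x. \<xi> x \<in> lp_sphere r) \<and> prop_size \<xi> \<le> ereal S}" for r
  have "profile p S TYPE('a) \<le> (INF \<xi>\<in>admissible q. ereal (q / p) * var_eps \<xi> q)"
    unfolding profile_def admissible_def[symmetric]
  proof (rule INF_mono)
    fix \<xi> assume "\<xi> \<in> admissible q"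
    then have "(\<lambda>x. mazur_map q p (\<xi> x)) \<in> admissible p"
      and "var_eps (\<lambda>x. mazur_map q p (\<xi> x)) p \<le> ereal (q / p) * var_eps \<xi> q"
      using assms \<open>p < q\<close>
      by (auto simp: admissible_def prop_size_mazur_map intro: mazur_map_lp_sphere var_eps_mazur_map_le)
    then show "\<exists>\<eta>\<in>admissible p. var_eps \<eta> p \<le> ereal (q / p) * var_eps \<xi> q"
      by blast
  qed
  also have "\<dots> = ereal (q / p) * profile q S TYPE('a)"
    using assms \<open>p < q\<close> by (simp add: INF_ereal_cmult profile_def admissible_def)
  finally show ?thesis .
qed

end
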